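(* Let $A$ be a real $m\times n$ matrix, $\mathbf b\in\mathbb R^m$, $\mathbf c\in\mathbb R^n$ (row vector), such that the linear program $\max\mathbf c\mathbf x$ s.t. $A\mathbf x\le\mathbf b$, $\mathbf x\ge0$ has unique optimal primal and dual solutions $\mathbf x^*$, $\mathbf y^*$. Then for every primal feasible $\mathbf x$, \[ \|\mathbf x_{\bar U}\|\le\frac{\mathbf c(\mathbf x^*-\mathbf x)}{\beta_D(A,\mathbf b,\mathbf c)}. \]
   Context: The dual is $\min\mathbf y\mathbf b$ s.t. $\mathbf yA\ge\mathbf c$, $\mathbf y\ge0$. $U=\{i:x^*_i>0\}$, $\bar U$ its complement in $\{1,\dots,n\}$, $\mathbf x_{\bar U}$ the restriction of $\mathbf x$ to coordinates in $\bar U$, and $\beta_D(A,\mathbf b,\mathbf c)=\min_{i\in\bar U}(\mathbf y^*A_{:,i}-c_i)$, with $A_{:,i}$ the $i$th column of $A$. $\|\cdot\|$ is the Euclidean norm. *)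

theory Defs
  imports "HOL-Analysis.Analysis"
begin

definition primal_feasible :: "real^'n^'m \<Rightarrow> real^'m \<Rightarrow> real^'n \<Rightarrow> bool" where
  "primal_feasible A b x \<longleftrightarrow> (\<forall>j. (A *v x) $ j \<le> b $ j) \<and> (\<forall>i. 0 \<le> x $ i)"

definition primal_optimal :: "real^'n^'m \<Rightarrow> real^'m \<Rightarrow> real^'n \<Rightarrow> real^'n \<Rightarrow> bool" where
  "primal_optimal A b c x \<longleftrightarrow> primal_feasible A b x \<and>
     (\<forall>x'. primal_feasible A b x' \<longrightarrow> c \<bullet> x' \<le> c \<bullet> x)"

definition dual_feasible :: "real^'n^'m \<Rightarrow> real^'n \<Rightarrow> real^'m \<Rightarrow> bool" where
  "dual_feasible A c y \<longleftrightarrow> (\<forall>i. c $ i \<le> (y v* A) $ i) \<and> (\<forall>j. 0 \<le> y $ j)"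

definition dual_optimal :: "real^'n^'m \<Rightarrow> real^'m \<Rightarrow> real^'n \<Rightarrow> real^'m \<Rightarrow> bool" where
  "dual_optimal A b c y \<longleftrightarrow> dual_feasible A c y \<and>
     (\<forall>y'. dual_feasible A c y' \<longrightarrow> y \<bullet> b \<le> y' \<bullet> b)"

definition Ubar :: "real^'n \<Rightarrow> 'n set" where
  "Ubar xs = {i. \<not> (xs $ i > 0)}"

definition beta_D :: "real^'n^'m \<Rightarrow> real^'n \<Rightarrow> real^'n \<Rightarrow> real^'m \<Rightarrow> real" where
  "beta_D A c xs ys = Min ((\<lambda>i. (ys v* A) $ i - c $ i) ` Ubar xs)"

definition restr_norm :: "real^'n \<Rightarrow> 'n set \<Rightarrow> real" where
  "restr_norm x S = sqrt (\<Sum>i\<in>S. (x $ i)^2)"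

end

theory Submission
  imports Defs
begin

text \<open>Uniqueness of both optima forces strict complementarity (Goldman--Tucker): for every
  \<open>i \<in> Ubar xs\<close> the reduced cost \<open>(y* A)\<^sub>i - c\<^sub>i\<close> is positive, and the two optimal values
  agree. Both facts come from Farkas' lemma applied to the homogenised primal system
  \<open>A x \<le> t b, x \<ge> 0, t \<ge> 0, c x \<ge> t c x*\<close>: a solution with \<open>x\<^sub>i > 0\<close> would yield a second
  primal optimum (\<open>x* + x\<close> if \<open>t = 0\<close>, \<open>x / t\<close> otherwise), so there is a dual certificate,
  which by dual uniqueness rescales to \<open>y*\<close> and shows \<open>(y* A)\<^sub>i > c\<^sub>i\<close>. Then for feasible
  \<open>x \<ge> 0\<close>, with sums and norms over \<open>Ubar xs\<close>,
  \<open>\<beta>\<^sub>D \<parallel>x\<parallel> \<le> \<beta>\<^sub>D \<Sum> x\<^sub>k \<le> (y* A - c) x \<le> y* b - c x = c (x* - x)\<close>.\<close>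

lemma convex_cone_nonneg_combinations:
  fixes f :: "'i::finite \<Rightarrow> 'a::real_vector"
  shows "convex_cone {\<Sum>i\<in>UNIV. \<mu> i *\<^sub>R f i | \<mu>. \<forall>i. 0 \<le> \<mu> i}"
  unfolding convex_cone_iff
proof (intro conjI ballI allI impI)
  show "0 \<in> {\<Sum>i\<in>UNIV. \<mu> i *\<^sub>R f i | \<mu>. \<forall>i. 0 \<le> \<mu> i}"
    by (rule CollectI, rule exI[of _ "\<lambda>_. 0"]) simp
next
  fix x y
  assume "x \<in> {\<Sum>i\<in>UNIV. \<mu> i *\<^sub>R f i | \<mu>. \<forall>i. 0 \<le> \<mu> i}"
    and "y \<in> {\<Sum>i\<in>UNIV. \<mu> i *\<^sub>R f i | \<mu>. \<forall>i. 0 \<le> \<mu> i}"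
  then obtain \<mu> \<nu> where "\<forall>i. 0 \<le> \<mu> i" "x = (\<Sum>i\<in>UNIV. \<mu> i *\<^sub>R f i)"
    and "\<forall>i. 0 \<le> \<nu> i" "y = (\<Sum>i\<in>UNIV. \<nu> i *\<^sub>R f i)" by blast
  then show "x + y \<in> {\<Sum>i\<in>UNIV. \<mu> i *\<^sub>R f i | \<mu>. \<forall>i. 0 \<le> \<mu> i}"
    by (intro CollectI exI[of _ "\<lambda>i. \<mu> i + \<nu> i"]) (simp add: scaleR_add_left sum.distrib)
next
  fix x and r :: real
  assume "x \<in> {\<Sum>i\<in>UNIV. \<mu> i *\<^sub>R f i | \<mu>. \<forall>i. 0 \<le> \<mu> i}" and "0 \<le> r"
  then obtain \<mu> where "\<forall>i. 0 \<le> \<mu> i" "x = (\<Sum>i\<in>UNIV. \<mu> i *\<^sub>R f i)" by blast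
  with \<open>0 \<le> r\<close> show "r *\<^sub>R x \<in> {\<Sum>i\<in>UNIV. \<mu> i *\<^sub>R f i | \<mu>. \<forall>i. 0 \<le> \<mu> i}"
    by (intro CollectI exI[of _ "\<lambda>i. r * \<mu> i"]) (simp add: scaleR_sum_right)
qed

lemma separating_hyperplane_closed_convex_cone:
  fixes C :: "'a::euclidean_space set"
  assumes "convex_cone C" "closed C" "g \<notin> C"
  obtains a where "\<forall>x\<in>C. 0 \<le> a \<bullet> x" "a \<bullet> g < 0"
proof -
  have "convex C"
    using assms(1) by (simp add: convex_cone_def)
  then obtain a r where ar: "a \<bullet> g < r" "\<forall>x\<in>C. r < a \<bullet> x"
    using separating_hyperplane_closed_point[OF _ assms(2,3)] by blast
  have "r < 0"
    using ar(2) convex_cone_contains_0[OF assms(1)] by fastforce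
  have "0 \<le> a \<bullet> x" if "x \<in> C" for x
  proof (rule ccontr)
    assume "\<not> 0 \<le> a \<bullet> x"
    then have "(r / (a \<bullet> x)) *\<^sub>R x \<in> C"
      using \<open>r < 0\<close> \<open>x \<in> C\<close> by (intro convex_cone_scaleR[OF assms(1)]) (auto simp: divide_nonpos_neg)
    with ar(2) \<open>\<not> 0 \<le> a \<bullet> x\<close> show False
      by fastforce
  qed
  with ar \<open>r < 0\<close> show thesis
    by (intro that) auto
qed

lemma farkas_lemma:
  fixes f :: "'i::finite \<Rightarrow> 'a::euclidean_space"
  assumes "\<And>w. \<forall>i. f i \<bullet> w \<le> 0 \<Longrightarrow> g \<bullet> w \<le> 0"
  obtains \<mu> where "\<forall>i. 0 \<le> \<mu> i" "g = (\<Sum>i\<in>UNIV. \<mu> i *\<^sub>R f i)"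
proof -
  let ?K = "{\<Sum>i\<in>UNIV. \<mu> i *\<^sub>R f i | \<mu>. \<forall>i. 0 \<le> \<mu> i}"
  let ?C = "convex_cone hull (range f)"
  have "range f \<subseteq> ?K"
  proof
    fix v assume "v \<in> range f"
    then obtain i where "v = f i" by blast
    then show "v \<in> ?K"
      by (intro CollectI exI[of _ "\<lambda>j. if j = i then 1 else 0"]) (simp add: sum.remove[of UNIV i])
  qed
  then have "?C \<subseteq> ?K"
    by (intro hull_minimal convex_cone_nonneg_combinations)
  moreover have "g \<in> ?C"
  proof (rule ccontr)
    assume "g \<notin> ?C"
    then obtain a where a: "\<forall>x\<in>?C. 0 \<le> a \<bullet> x" "a \<bullet> g < 0"
      using separating_hyperplane_closed_convex_cone[OF convex_cone_convex_cone_hull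
          closed_convex_cone_hull[OF finite_imageI[OF finite]]] by blast
    have "f i \<bullet> (- a) \<le> 0" for i
      using bspec[OF a(1) hull_inc[OF rangeI]] by (simp add: inner_commute)
    then have "g \<bullet> (- a) \<le> 0"
      using assms by blast
    with a(2) show False
      by (simp add: inner_commute)
  qed
  ultimately show thesis
    using that by auto
qed

lemma sum_UNIV_option:
  "(\<Sum>u\<in>(UNIV :: 'a::finite option set). h u) = h None + (\<Sum>a\<in>UNIV. h (Some a))"
  by (simp add: UNIV_option_conv sum.reindex)

lemma sum_UNIV_Plus:
  "(\<Sum>u\<in>(UNIV :: ('a::finite + 'b::finite) set). h u) = (\<Sum>a\<in>UNIV. h (Inl a)) + (\<Sum>a\<in>UNIV. h (Inr a))"
  by (subst UNIV_Plus_UNIV[symmetric], subst sum.Plus) auto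

text \<open>The constraints of the homogenised system, as vectors acting on \<open>(x, t)\<close>, are indexed by
  \<open>None\<close> (\<open>t \<ge> 0\<close>), \<open>Some None\<close> (\<open>c x \<ge> t z\<close>), the rows of \<open>A\<close> and the coordinates of \<open>x\<close>.\<close>

lemma homogeneous_lp_farkas:
  fixes A :: "real^'n^'m" and b :: "real^'m" and c g :: "real^'n" and z :: real
  assumes "\<And>x t. 0 \<le> t \<Longrightarrow> \<forall>j. (A *v x) $ j \<le> t * b $ j \<Longrightarrow> \<forall>k. 0 \<le> x $ k \<Longrightarrow>
      t * z \<le> c \<bullet> x \<Longrightarrow> g \<bullet> x \<le> 0"
  obtains y \<theta> where "\<forall>j. 0 \<le> y $ j" "0 \<le> \<theta>" "\<forall>k. \<theta> * c $ k + g $ k \<le> (y v* A) $ k"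
    "y \<bullet> b \<le> \<theta> * z"
proof -
  define f :: "('m + 'n) option option \<Rightarrow> (real^'n) \<times> real" where
    "f u = (case u of None \<Rightarrow> (0, -1) | Some None \<Rightarrow> (-c, z)
        | Some (Some (Inl j)) \<Rightarrow> (A $ j, - b $ j) | Some (Some (Inr k)) \<Rightarrow> (- axis k 1, 0))" for u
  have "(g, 0) \<bullet> w \<le> 0" if "\<forall>u. f u \<bullet> w \<le> 0" for w
  proof -
    obtain x t where w: "w = (x, t)" by (cases w)
    have "0 \<le> t" "t * z \<le> c \<bullet> x"
      using that[rule_format, of None] that[rule_format, of "Some None"]
      by (auto simp: f_def w mult.commute)
    moreover have "(A *v x) $ j \<le> t * b $ j" for j
      using that[rule_format, of "Some (Some (Inl j))"]
      by (simp add: f_def w matrix_vector_mul_component mult.commute)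
    moreover have "0 \<le> x $ k" for k
      using that[rule_format, of "Some (Some (Inr k))"] by (simp add: f_def w inner_axis')
    ultimately show ?thesis
      using assms by (simp add: w)
  qed
  then obtain \<mu> where \<mu>: "\<forall>u. 0 \<le> \<mu> u" and g: "(g, 0) = (\<Sum>u\<in>UNIV. \<mu> u *\<^sub>R f u)"
    using farkas_lemma by blast
  define y :: "real^'m" where "y = (\<chi> j. \<mu> (Some (Some (Inl j))))"
  have gk: "g $ k = (y v* A) $ k - \<mu> (Some (Some (Inr k))) - \<mu> (Some None) * c $ k" for k
  proof -
    have "g $ k = (\<Sum>u\<in>UNIV. \<mu> u * (fst (f u) $ k))"
      using arg_cong[OF g, of "\<lambda>p. fst p $ k"] by (simp add: fst_sum)
    then show ?thesis
      by (simp add: sum_UNIV_option sum_UNIV_Plus f_def y_def vector_matrix_mult_def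
          mult.commute axis_def if_distrib cong: if_cong)
  qed
  have gb: "0 = \<mu> (Some None) * z - \<mu> None - y \<bullet> b"
  proof -
    have "0 = (\<Sum>u\<in>UNIV. \<mu> u * snd (f u))"
      using arg_cong[OF g, of snd] by (simp add: snd_sum)
    then show ?thesis
      by (simp add: sum_UNIV_option sum_UNIV_Plus f_def y_def inner_vec_def sum_negf)
  qed
  show thesis
  proof (rule that[of y "\<mu> (Some None)"])
    show "\<forall>j. 0 \<le> y $ j" "0 \<le> \<mu> (Some None)"
      using \<mu> by (simp_all add: y_def)
    show "\<forall>k. \<mu> (Some None) * c $ k + g $ k \<le> (y v* A) $ k"
    proof
      fix k
      show "\<mu> (Some None) * c $ k + g $ k \<le> (y v* A) $ k"
        using gk[of k] \<mu>[rule_format, of "Some (Some (Inr k))"] by linarith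
    qed
    show "y \<bullet> b \<le> \<mu> (Some None) * z"
      using gb \<mu>[rule_format, of None] by linarith
  qed
qed

lemma nonneg_inner_nonneg:
  fixes x y :: "real^'n"
  assumes "\<forall>k. 0 \<le> x $ k" "\<forall>k. 0 \<le> y $ k"
  shows "0 \<le> x \<bullet> y"
  using assms by (simp add: inner_vec_def sum_nonneg)

lemma reduced_cost_inner_le_duality_gap:
  assumes "primal_feasible A b x" "dual_feasible A c y"
  shows "(y v* A - c) \<bullet> x \<le> y \<bullet> b - c \<bullet> x"
proof -
  have "0 \<le> y \<bullet> (b - A *v x)"
    using assms by (intro nonneg_inner_nonneg) (auto simp: primal_feasible_def dual_feasible_def)
  then show ?thesis
    by (simp add: inner_diff_left inner_diff_right dot_lmul_matrix)
qed

lemma weak_duality: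
  assumes "primal_feasible A b x" "dual_feasible A c y"
  shows "c \<bullet> x \<le> y \<bullet> b"
proof -
  have "0 \<le> (y v* A - c) \<bullet> x"
    using assms by (intro nonneg_inner_nonneg) (auto simp: primal_feasible_def dual_feasible_def)
  with reduced_cost_inner_le_duality_gap[OF assms] show ?thesis
    by linarith
qed

lemma primal_optimal_if_ge:
  assumes "primal_optimal A b c xs" "primal_feasible A b x" "c \<bullet> xs \<le> c \<bullet> x"
  shows "primal_optimal A b c x"
  using assms by (force simp: primal_optimal_def)

lemma dual_optimal_if_le:
  assumes "dual_optimal A b c ys" "dual_feasible A c y" "y \<bullet> b \<le> ys \<bullet> b"
  shows "dual_optimal A b c y"
  using assms by (force simp: dual_optimal_def)

lemma dual_optimal_if_le_primal:
  assumes "dual_feasible A c y" "primal_feasible A b x" "y \<bullet> b \<le> c \<bullet> x"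
  shows "dual_optimal A b c y"
  using assms weak_duality[OF assms(2)] by (force simp: dual_optimal_def)

lemma Ubar_imp_eq_0:
  assumes "primal_feasible A b xs" "i \<in> Ubar xs"
  shows "xs $ i = 0"
  using assms by (auto simp: Ubar_def primal_feasible_def intro: antisym)

lemma unique_primal_optimum_homogeneous:
  fixes A :: "real^'n^'m"
  assumes opt: "primal_optimal A b c xs" and uniq: "\<forall>x'. primal_optimal A b c x' \<longrightarrow> x' = xs"
    and "xs $ i = 0" and "0 \<le> t" and Ax: "\<forall>j. (A *v x) $ j \<le> t * b $ j"
    and x0: "\<forall>k. 0 \<le> x $ k" and cx: "t * (c \<bullet> xs) \<le> c \<bullet> x"
  shows "x $ i \<le> 0"
proof (cases "t = 0")
  case True
  have xs: "(A *v xs) $ j \<le> b $ j" "0 \<le> xs $ k" for j k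
    using opt by (auto simp: primal_optimal_def primal_feasible_def)
  have "primal_feasible A b (xs + x)"
    unfolding primal_feasible_def
  proof (intro conjI allI)
    fix j k
    show "(A *v (xs + x)) $ j \<le> b $ j"
      using xs(1)[of j] Ax[rule_format, of j] True by (simp add: matrix_vector_right_distrib)
    show "0 \<le> (xs + x) $ k"
      using xs(2)[of k] x0[rule_format, of k] by simp
  qed
  moreover have "c \<bullet> xs \<le> c \<bullet> (xs + x)"
    using cx True by (simp add: inner_add_right)
  ultimately have "xs + x = xs"
    using uniq primal_optimal_if_ge[OF opt] by blast
  then show ?thesis
    by simp
next
  case False
  with \<open>0 \<le> t\<close> have "0 < t" by simp
  have "primal_feasible A b ((1 / t) *\<^sub>R x)"
    using Ax x0 \<open>0 < t\<close>
    by (simp add: primal_feasible_def matrix_vector_mult_scaleR divide_le_eq mult.commute)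
  moreover have "c \<bullet> xs \<le> c \<bullet> ((1 / t) *\<^sub>R x)"
    using cx \<open>0 < t\<close> by (simp add: le_divide_eq mult.commute)
  ultimately have "(1 / t) *\<^sub>R x = xs"
    using uniq primal_optimal_if_ge[OF opt] by blast
  then have "x $ i / t = 0"
    using arg_cong[of _ _ "\<lambda>v. v $ i"] \<open>xs $ i = 0\<close> by fastforce
  with \<open>0 < t\<close> show ?thesis
    by simp
qed

lemma unique_dual_optimum_certificate:
  fixes A :: "real^'n^'m"
  assumes opt: "dual_optimal A b c ys" and uniq: "\<forall>y'. dual_optimal A b c y' \<longrightarrow> y' = ys"
    and xs: "primal_feasible A b xs"
    and y0: "\<forall>j. 0 \<le> y $ j" and "0 \<le> \<theta>"
    and yA: "\<forall>k. \<theta> * c $ k + axis i 1 $ k \<le> (y v* A) $ k" and yb: "y \<bullet> b \<le> \<theta> * (c \<bullet> xs)"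
  shows "c $ i < (ys v* A) $ i" and "ys \<bullet> b = c \<bullet> xs"
proof -
  have ys: "dual_feasible A c ys"
    using opt by (simp add: dual_optimal_def)
  have yA_ge: "\<theta> * c $ k \<le> (y v* A) $ k" for k
    using yA[rule_format, of k] by (simp add: axis_def split: if_splits)
  have yA_i: "\<theta> * c $ i + 1 \<le> (y v* A) $ i"
    using yA[rule_format, of i] by simp
  have "\<theta> \<noteq> 0"
  proof
    assume "\<theta> = 0"
    have "dual_feasible A c (ys + y)"
      unfolding dual_feasible_def
    proof (intro conjI allI)
      fix j k
      show "c $ k \<le> ((ys + y) v* A) $ k"
        using ys yA_ge[of k] \<open>\<theta> = 0\<close>
        by (simp add: dual_feasible_def vector_matrix_left_distrib add_increasing2)
      show "0 \<le> (ys + y) $ j"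
        using ys y0 by (simp add: dual_feasible_def)
    qed
    moreover have "(ys + y) \<bullet> b \<le> ys \<bullet> b"
      using yb \<open>\<theta> = 0\<close> by (simp add: inner_add_left)
    ultimately have "ys + y = ys"
      using uniq dual_optimal_if_le[OF opt] by blast
    with yA_i \<open>\<theta> = 0\<close> show False
      by simp
  qed
  with \<open>0 \<le> \<theta>\<close> have "0 < \<theta>" by simp
  have yA': "((1 / \<theta>) *\<^sub>R y v* A) $ k = (y v* A) $ k / \<theta>" for k
    by (simp add: scaleR_vector_matrix_assoc)
  have "dual_feasible A c ((1 / \<theta>) *\<^sub>R y)"
    using y0 yA_ge \<open>0 < \<theta>\<close> by (simp add: dual_feasible_def yA' le_divide_eq mult.commute)
  moreover have yb': "(1 / \<theta>) *\<^sub>R y \<bullet> b \<le> c \<bullet> xs"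
    using yb \<open>0 < \<theta>\<close> by (simp add: divide_le_eq mult.commute)
  ultimately have "dual_optimal A b c ((1 / \<theta>) *\<^sub>R y)"
    by (rule dual_optimal_if_le_primal[OF _ xs])
  then have ys_eq: "ys = (1 / \<theta>) *\<^sub>R y"
    using uniq by blast
  show "c $ i < (ys v* A) $ i"
    using yA_i \<open>0 < \<theta>\<close> by (simp add: ys_eq yA' less_divide_eq mult.commute)
  show "ys \<bullet> b = c \<bullet> xs"
    using yb' weak_duality[OF xs ys] by (simp add: ys_eq)
qed

lemma unique_optima_strictly_complementary:
  fixes A :: "real^'n^'m"
  assumes "primal_optimal A b c xs" "\<forall>x'. primal_optimal A b c x' \<longrightarrow> x' = xs"
    and "dual_optimal A b c ys" "\<forall>y'. dual_optimal A b c y' \<longrightarrow> y' = ys"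
    and "i \<in> Ubar xs"
  shows "c $ i < (ys v* A) $ i" and "ys \<bullet> b = c \<bullet> xs"
proof -
  have xs: "primal_feasible A b xs"
    using assms(1) by (simp add: primal_optimal_def)
  have "axis i 1 \<bullet> x \<le> 0"
    if "0 \<le> t" "\<forall>j. (A *v x) $ j \<le> t * b $ j" "\<forall>k. 0 \<le> x $ k" "t * (c \<bullet> xs) \<le> c \<bullet> x" for x t
    using unique_primal_optimum_homogeneous[OF assms(1,2) Ubar_imp_eq_0[OF xs assms(5)] that]
    by (simp add: inner_axis')
  then obtain y \<theta> where "\<forall>j. 0 \<le> y $ j" "0 \<le> \<theta>" "\<forall>k. \<theta> * c $ k + axis i 1 $ k \<le> (y v* A) $ k"
      "y \<bullet> b \<le> \<theta> * (c \<bullet> xs)"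
    by (rule homogeneous_lp_farkas)
  from unique_dual_optimum_certificate[OF assms(3,4) xs this]
  show "c $ i < (ys v* A) $ i" and "ys \<bullet> b = c \<bullet> xs" .
qed

lemma beta_D_le:
  fixes A :: "real^'n^'m"
  assumes "i \<in> Ubar xs"
  shows "beta_D A c xs ys \<le> (ys v* A) $ i - c $ i"
  using assms unfolding beta_D_def by (intro Min_le) auto

lemma beta_D_pos:
  fixes A :: "real^'n^'m"
  assumes "Ubar xs \<noteq> {}" "\<forall>i\<in>Ubar xs. c $ i < (ys v* A) $ i"
  shows "0 < beta_D A c xs ys"
  using assms unfolding beta_D_def by (subst Min_gr_iff) auto

lemma restr_norm_le_sum:
  assumes "\<And>k. k \<in> S \<Longrightarrow> 0 \<le> x $ k"
  shows "restr_norm x S \<le> (\<Sum>k\<in>S. x $ k)"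
  using L2_set_le_sum[OF assms] by (simp add: restr_norm_def L2_set_def)

theorem mainTheorem14:
  fixes A :: "real^'n^'m" and b :: "real^'m" and c :: "real^'n"
    and xs :: "real^'n" and ys :: "real^'m" and x :: "real^'n"
  assumes "primal_optimal A b c xs"
    and "\<forall>x'. primal_optimal A b c x' \<longrightarrow> x' = xs"
    and "dual_optimal A b c ys"
    and "\<forall>y'. dual_optimal A b c y' \<longrightarrow> y' = ys"
    and "primal_feasible A b x"
    and "Ubar xs \<noteq> {}"
  shows "restr_norm x (Ubar xs) \<le> (c \<bullet> (xs - x)) / beta_D A c xs ys"
proof -
  let ?U = "Ubar xs" and ?\<beta> = "beta_D A c xs ys"
  note complementary = unique_optima_strictly_complementary[OF assms(1-4)]
  obtain i where "i \<in> ?U"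
    using assms(6) by blast
  have x0: "\<forall>k. 0 \<le> x $ k" and ys: "dual_feasible A c ys"
    using assms(3,5) by (auto simp: primal_feasible_def dual_optimal_def)
  have "0 < ?\<beta>"
    using beta_D_pos[OF assms(6)] complementary(1) by blast
  have "?\<beta> * restr_norm x ?U \<le> (\<Sum>k\<in>?U. ?\<beta> * x $ k)"
    using restr_norm_le_sum[of ?U x] x0 \<open>0 < ?\<beta>\<close> by (simp add: sum_distrib_left[symmetric])
  also have "\<dots> \<le> (\<Sum>k\<in>?U. ((ys v* A) $ k - c $ k) * x $ k)"
    using beta_D_le x0 by (intro sum_mono mult_right_mono) auto
  also have "\<dots> \<le> (\<Sum>k\<in>UNIV. ((ys v* A) $ k - c $ k) * x $ k)"
    using ys x0 by (intro sum_mono2) (auto simp: dual_feasible_def)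
  also have "\<dots> \<le> ys \<bullet> b - c \<bullet> x"
    using reduced_cost_inner_le_duality_gap[OF assms(5) ys] by (simp add: inner_vec_def)
  also have "\<dots> = c \<bullet> (xs - x)"
    using complementary(2)[OF \<open>i \<in> ?U\<close>] by (simp add: inner_diff_right)
  finally show ?thesis
    using \<open>0 < ?\<beta>\<close> by (simp add: pos_le_divide_eq mult.commute)
qed

end
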